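(* Let $G$ be an infinite totally bounded topological group with identity $e$, and let $\vec m=(m_1,\dots,m_k)\in\mathbb{Z}^k$ satisfy $m_1+\dots+m_k=0$. Then every neighbourhood $U$ of $e$ in $G$ is a Ramsey $\vec m$-product subset of $G$.
   Context: A subset $A$ of a group $G$ is a Ramsey $\vec m$-product subset, for $\vec m=(m_1,\dots,m_k)\in\mathbb{Z}^k$, if every infinite subset $X\subseteq G$ contains pairwise distinct $x_1,\dots,x_k\in X$ such that $x_{\sigma(1)}^{m_1}x_{\sigma(2)}^{m_2}\cdots x_{\sigma(k)}^{m_k}\in A$ for every permutation $\sigma\in S_k$. *)

theory Defs
  imports "HOL-Analysis.Analysis" "HOL-Algebra.Group" "HOL-Combinatorics.Permutations"
begin

definition topological_group :: "('a, 'b) monoid_scheme \<Rightarrow> 'a topology \<Rightarrow> bool" where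
  "topological_group G T \<longleftrightarrow> group G \<and> topspace T = carrier G
     \<and> continuous_map (prod_topology T T) T (\<lambda>p. fst p \<otimes>\<^bsub>G\<^esub> snd p)
     \<and> continuous_map T T (\<lambda>x. inv\<^bsub>G\<^esub> x)"

definition nbhd :: "'a topology \<Rightarrow> 'a \<Rightarrow> 'a set \<Rightarrow> bool" where
  "nbhd T x U \<longleftrightarrow> U \<subseteq> topspace T \<and> (\<exists>V. openin T V \<and> x \<in> V \<and> V \<subseteq> U)"

definition totally_bounded_group :: "('a, 'b) monoid_scheme \<Rightarrow> 'a topology \<Rightarrow> bool" where
  "totally_bounded_group G T \<longleftrightarrow>
     (\<forall>U. nbhd T \<one>\<^bsub>G\<^esub> U \<longrightarrow>
        (\<exists>F. finite F \<and> F \<subseteq> carrier G \<and>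
             carrier G = {f \<otimes>\<^bsub>G\<^esub> u | f u. f \<in> F \<and> u \<in> U}))"

definition gprod :: "('a, 'b) monoid_scheme \<Rightarrow> 'a list \<Rightarrow> 'a" where
  "gprod G xs = foldr (\<lambda>x y. x \<otimes>\<^bsub>G\<^esub> y) xs \<one>\<^bsub>G\<^esub>"

text \<open>Ramsey m-product subset, for m = (m_1,...,m_k) given as a list of length k
(indices shifted to 0..k-1).\<close>
definition ramsey_product_subset ::
    "('a, 'b) monoid_scheme \<Rightarrow> int list \<Rightarrow> 'a set \<Rightarrow> bool" where
  "ramsey_product_subset G m A \<longleftrightarrow>
     (\<forall>X. X \<subseteq> carrier G \<and> infinite X \<longrightarrow>
        (\<exists>x. (\<forall>i<length m. x i \<in> X) \<and> inj_on x {..<length m} \<and>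
             (\<forall>\<sigma>. \<sigma> permutes {..<length m} \<longrightarrow>
                gprod G (map (\<lambda>i. x (\<sigma> i) [^]\<^bsub>G\<^esub> (m ! i)) [0..<length m]) \<in> A)))"

end

theory Submission
  imports Defs
begin

text \<open>Total boundedness makes \<open>G\<close> a SIN group: conjugating a neighbourhood by the finitely
many elements of a finite cover \<open>F V\<^sub>0 = G\<close> yields a neighbourhood \<open>W\<close> all of whose conjugates
lie in \<open>V\<^sub>0\<^sup>3\<close>. Cover \<open>G\<close> by finitely many translates \<open>f W\<close>; an infinite \<open>X\<close> meets one of them
in infinitely many points \<open>x\<^sub>i = f w\<^sub>i\<close>. Moving every \<open>f\<close> to the right only conjugates the
\<open>w\<^sub>i\<close>, so \<open>\<Prod> x\<^bsub>\<sigma> i\<^esub>\<^bsup>m\<^sub>i\<^esup> = c f\<^bsup>\<Sum> m\<^sub>i\<^esup> = c\<close> with \<open>c\<close> a product of \<open>\<Sum> \<bar>m\<^sub>i\<bar>\<close> conjugates of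
elements of \<open>W \<union> W\<inverse>\<close>; by continuity of multiplication such products lie in \<open>U\<close> once \<open>W\<close> is
small enough.\<close>

fun products :: "('a, 'b) monoid_scheme \<Rightarrow> 'a set \<Rightarrow> nat \<Rightarrow> 'a set" where
  "products G S 0 = {\<one>\<^bsub>G\<^esub>}"
| "products G S (Suc n) = {a \<otimes>\<^bsub>G\<^esub> b | a b. a \<in> S \<and> b \<in> products G S n}"

definition conj_closure :: "('a, 'b) monoid_scheme \<Rightarrow> 'a set \<Rightarrow> 'a set" where
  "conj_closure G S = {g \<otimes>\<^bsub>G\<^esub> s \<otimes>\<^bsub>G\<^esub> inv\<^bsub>G\<^esub> g | g s. g \<in> carrier G \<and> s \<in> S}"

context group begin

lemma inv_mult_cancel_left [simp]: "x \<in> carrier G \<Longrightarrow> y \<in> carrier G \<Longrightarrow> inv x \<otimes> (x \<otimes> y) = y"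
  by (simp add: m_assoc [symmetric])

lemma products_carrier: "S \<subseteq> carrier G \<Longrightarrow> products G S n \<subseteq> carrier G"
  by (induction n) auto

lemma products_mono: "S \<subseteq> S' \<Longrightarrow> products G S n \<subseteq> products G S' n"
  by (induction n) auto

lemma products_mult:
  assumes "S \<subseteq> carrier G" "a \<in> products G S n" "b \<in> products G S k"
  shows "a \<otimes> b \<in> products G S (n + k)"
  using assms(2)
proof (induction n arbitrary: a)
  case 0
  then show ?case using assms(3) products_carrier[OF assms(1)] by force
next
  case (Suc n)
  then obtain a1 a2 where a: "a = a1 \<otimes> a2" "a1 \<in> S" "a2 \<in> products G S n" by auto
  have "a1 \<in> carrier G" "a2 \<in> carrier G" "b \<in> carrier G"
    using a assms products_carrier[OF assms(1)] by auto
  then have "a \<otimes> b = a1 \<otimes> (a2 \<otimes> b)" using a(1) by (simp add: m_assoc)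
  then show ?case using a Suc.IH by auto
qed

lemma products_Suc_0I: "S \<subseteq> carrier G \<Longrightarrow> s \<in> S \<Longrightarrow> s \<in> products G S (Suc 0)"
  by (auto intro!: exI[of _ s])

lemma subset_conj_closure: "S \<subseteq> carrier G \<Longrightarrow> S \<subseteq> conj_closure G S"
  unfolding conj_closure_def by force

lemma conj_closure_mono: "S \<subseteq> S' \<Longrightarrow> conj_closure G S \<subseteq> conj_closure G S'"
  unfolding conj_closure_def by blast

lemma conj_closure_carrier: "S \<subseteq> carrier G \<Longrightarrow> conj_closure G S \<subseteq> carrier G"
  unfolding conj_closure_def by auto

end

locale normal_symmetric_subset = group +
  fixes S
  assumes subset: "S \<subseteq> carrier G"
    and conj_closed: "g \<in> carrier G \<Longrightarrow> s \<in> S \<Longrightarrow> g \<otimes> s \<otimes> inv g \<in> S"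
    and inv_closed: "s \<in> S \<Longrightarrow> inv s \<in> S"

lemma (in group) normal_symmetric_subset_conj_closure:
  assumes "S \<subseteq> carrier G" and "\<And>s. s \<in> S \<Longrightarrow> inv s \<in> S"
  shows "normal_symmetric_subset G (conj_closure G S)"
proof
  show "conj_closure G S \<subseteq> carrier G" using assms(1) by (rule conj_closure_carrier)
next
  fix h c assume h: "h \<in> carrier G" and "c \<in> conj_closure G S"
  then obtain g s where gs: "c = g \<otimes> s \<otimes> inv g" "g \<in> carrier G" "s \<in> S"
    unfolding conj_closure_def by blast
  then have "h \<otimes> c \<otimes> inv h = (h \<otimes> g) \<otimes> s \<otimes> inv (h \<otimes> g)"
    using h assms(1) by (auto simp: m_assoc inv_mult_group)
  then show "h \<otimes> c \<otimes> inv h \<in> conj_closure G S"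
    unfolding conj_closure_def using gs h by blast
next
  fix c assume "c \<in> conj_closure G S"
  then obtain g s where gs: "c = g \<otimes> s \<otimes> inv g" "g \<in> carrier G" "s \<in> S"
    unfolding conj_closure_def by blast
  then have "inv c = g \<otimes> inv s \<otimes> inv g"
    using assms(1) by (auto simp: m_assoc inv_mult_group)
  then show "inv c \<in> conj_closure G S"
    unfolding conj_closure_def using gs assms(2) by blast
qed

context normal_symmetric_subset begin

lemma products_subset: "products G S n \<subseteq> carrier G"
  using subset by (rule products_carrier)

lemma products_conj:
  "g \<in> carrier G \<Longrightarrow> a \<in> products G S n \<Longrightarrow> g \<otimes> a \<otimes> inv g \<in> products G S n"
proof (induction n arbitrary: a)
  case (Suc n)
  then obtain a1 a2 where a: "a = a1 \<otimes> a2" "a1 \<in> S" "a2 \<in> products G S n" by auto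
  have "a1 \<in> carrier G" "a2 \<in> carrier G" using a subset products_subset by auto
  then have "g \<otimes> a \<otimes> inv g = (g \<otimes> a1 \<otimes> inv g) \<otimes> (g \<otimes> a2 \<otimes> inv g)"
    using Suc.prems a(1) by (simp add: m_assoc)
  moreover have "g \<otimes> a1 \<otimes> inv g \<in> S" using Suc.prems(1) a(2) by (rule conj_closed)
  moreover have "g \<otimes> a2 \<otimes> inv g \<in> products G S n" using Suc.IH Suc.prems a(3) by blast
  ultimately show ?case by auto
qed simp

lemma products_inv: "a \<in> products G S n \<Longrightarrow> inv a \<in> products G S n"
proof (induction n arbitrary: a)
  case (Suc n)
  then obtain a1 a2 where a: "a = a1 \<otimes> a2" "a1 \<in> S" "a2 \<in> products G S n" by auto
  have "a1 \<in> carrier G" "a2 \<in> carrier G" using a subset products_subset by auto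
  then have "inv a = inv a2 \<otimes> inv a1" using a(1) by (simp add: inv_mult_group)
  moreover have "inv a2 \<otimes> inv a1 \<in> products G S (n + Suc 0)"
    using Suc.IH a inv_closed subset by (intro products_mult products_Suc_0I) auto
  ultimately show ?case by simp
qed simp

lemma nat_pow_mult_factor:
  assumes "a \<in> carrier G" "w \<in> S"
  shows "\<exists>c \<in> products G S n. (a \<otimes> w) [^] n = c \<otimes> a [^] n"
proof (induction n)
  case (Suc n)
  then obtain c where c: "c \<in> products G S n" "(a \<otimes> w) [^] n = c \<otimes> a [^] n" by auto
  define d where "d = a [^] Suc n \<otimes> w \<otimes> inv (a [^] Suc n)"
  have "c \<in> carrier G" "w \<in> carrier G" using c(1) assms(2) subset products_subset by auto
  then have "(a \<otimes> w) [^] Suc n = c \<otimes> d \<otimes> a [^] Suc n"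
    using c(2) assms(1) unfolding d_def by (simp add: m_assoc)
  moreover have "c \<otimes> d \<in> products G S (n + Suc 0)"
    unfolding d_def using c(1) assms conj_closed subset by (intro products_mult products_Suc_0I) auto
  ultimately show ?case by auto
qed simp

lemma int_pow_mult_factor:
  assumes a: "a \<in> carrier G" and w: "w \<in> S"
  shows "\<exists>c \<in> products G S (nat \<bar>k\<bar>). (a \<otimes> w) [^] k = c \<otimes> a [^] k"
proof (cases "k \<ge> 0")
  case True
  then show ?thesis using nat_pow_mult_factor[OF a w, of "nat k"] by (simp add: int_pow_int)
next
  case False
  define n where "n = nat (- k)"
  have k: "k = - int n" and n: "nat \<bar>k\<bar> = n" using False unfolding n_def by auto
  obtain c where c: "c \<in> products G S n" "(a \<otimes> w) [^] n = c \<otimes> a [^] n"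
    using nat_pow_mult_factor[OF a w] by blast
  have cc: "c \<in> carrier G" and wc: "w \<in> carrier G"
    using c(1) w products_subset subset by auto
  \<comment> \<open>\<open>(c a\<^sup>n)\<inverse> = (a\<^sup>-\<^sup>n c\<inverse> a\<^sup>n) a\<^sup>-\<^sup>n\<close>\<close>
  define d where "d = inv (a [^] n) \<otimes> inv c \<otimes> inv (inv (a [^] n))"
  have "d \<in> products G S n"
    unfolding d_def using a c(1) by (intro products_conj products_inv) auto
  have "(a \<otimes> w) [^] k = inv (c \<otimes> a [^] n)"
    using a wc by (simp add: k int_pow_neg_int c(2))
  also have "\<dots> = d \<otimes> a [^] k"
    using a cc unfolding d_def by (simp add: k int_pow_neg_int inv_mult_group m_assoc)
  finally show ?thesis using \<open>d \<in> products G S n\<close> n by auto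
qed

lemma gprod_int_pow_mult_factor:
  assumes a: "a \<in> carrier G" and w: "\<forall>i \<in> set is. w i \<in> S"
  shows "\<exists>c \<in> products G S (\<Sum>i\<leftarrow>is. nat \<bar>e i\<bar>).
           gprod G (map (\<lambda>i. (a \<otimes> w i) [^] e i) is) = c \<otimes> a [^] (\<Sum>i\<leftarrow>is. e i)"
  using w
proof (induction "is")
  case Nil
  then show ?case by (simp add: gprod_def)
next
  case (Cons i "is")
  then obtain c2 where c2: "c2 \<in> products G S (\<Sum>i\<leftarrow>is. nat \<bar>e i\<bar>)"
      "gprod G (map (\<lambda>i. (a \<otimes> w i) [^] e i) is) = c2 \<otimes> a [^] (\<Sum>i\<leftarrow>is. e i)"
    by auto
  obtain c1 where c1: "c1 \<in> products G S (nat \<bar>e i\<bar>)" "(a \<otimes> w i) [^] e i = c1 \<otimes> a [^] e i"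
    using int_pow_mult_factor[OF a] Cons.prems by fastforce
  have "c1 \<in> carrier G" "c2 \<in> carrier G" using c1 c2 products_subset by auto
  define d where "d = a [^] e i \<otimes> c2 \<otimes> inv (a [^] e i)"
  have "d \<in> products G S (\<Sum>i\<leftarrow>is. nat \<bar>e i\<bar>)"
    unfolding d_def using a c2(1) by (intro products_conj) auto
  moreover have "gprod G (map (\<lambda>i. (a \<otimes> w i) [^] e i) (i # is))
      = (c1 \<otimes> d) \<otimes> a [^] (\<Sum>i\<leftarrow>i # is. e i)"
    using c1(2) c2(2) \<open>c1 \<in> carrier G\<close> \<open>c2 \<in> carrier G\<close> a
    unfolding d_def by (simp add: gprod_def m_assoc int_pow_mult)
  ultimately show ?case using products_mult[OF subset c1(1)] by auto
qed

end

lemma (in normal_symmetric_subset) gprod_translates_in_products: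
  assumes f: "f \<in> carrier G" and w: "\<And>i. i < length m \<Longrightarrow> w i \<in> S" and m: "sum_list m = 0"
  shows "gprod G (map (\<lambda>i. (f \<otimes> w i) [^] (m ! i)) [0..<length m]) \<in> products G S (\<Sum>e\<leftarrow>m. nat \<bar>e\<bar>)"
proof -
  obtain c where c: "c \<in> products G S (\<Sum>i\<leftarrow>[0..<length m]. nat \<bar>m ! i\<bar>)"
      "gprod G (map (\<lambda>i. (f \<otimes> w i) [^] (m ! i)) [0..<length m]) = c \<otimes> f [^] (\<Sum>i\<leftarrow>[0..<length m]. m ! i)"
    using gprod_int_pow_mult_factor[OF f, of "[0..<length m]" w "\<lambda>i. m ! i"] w by auto
  have "map (\<lambda>i. nat \<bar>m ! i\<bar>) [0..<length m] = map (\<lambda>e. nat \<bar>e\<bar>) m"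
    by (rule nth_equalityI) auto
  moreover have "(\<Sum>i\<leftarrow>[0..<length m]. m ! i) = 0" using m by (simp add: map_nth)
  moreover have "c \<in> carrier G" using c(1) products_subset by blast
  ultimately show ?thesis using c by simp
qed

lemma (in normal_symmetric_subset) ramsey_product_subset_if_translates_cover:
  assumes F: "finite F" "F \<subseteq> carrier G" and cover: "carrier G = {f \<otimes> u | f u. f \<in> F \<and> u \<in> S}"
    and m: "sum_list m = 0" and U: "products G S (\<Sum>e\<leftarrow>m. nat \<bar>e\<bar>) \<subseteq> U"
  shows "ramsey_product_subset G m U"
  unfolding ramsey_product_subset_def
proof (intro allI impI)
  fix X assume X: "X \<subseteq> carrier G \<and> infinite X"
  define k where "k = length m"
  have "\<forall>y\<in>X. \<exists>f\<in>F. \<exists>u\<in>S. y = f \<otimes> u"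
  proof
    fix y assume "y \<in> X"
    then have "y \<in> carrier G" using X by blast
    then have "y \<in> {f \<otimes> u | f u. f \<in> F \<and> u \<in> S}" unfolding cover .
    then show "\<exists>f\<in>F. \<exists>u\<in>S. y = f \<otimes> u" by blast
  qed
  then obtain f where f: "f \<in> F" "infinite {y \<in> X. \<exists>u\<in>S. y = f \<otimes> u}"
    using pigeonhole_infinite_rel[where R = "\<lambda>y f. \<exists>u\<in>S. y = f \<otimes> u"] X F(1) by blast
  obtain B where B: "finite B" "card B = k" "B \<subseteq> {y \<in> X. \<exists>u\<in>S. y = f \<otimes> u}"
    using infinite_arbitrarily_large[OF f(2)] by blast
  obtain x where x: "bij_betw x {..<k} B"
    using ex_bij_betw_nat_finite[OF B(1)] B(2) by (auto simp: atLeast0LessThan)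
  then have "\<forall>i<k. \<exists>u \<in> S. x i = f \<otimes> u" using B(3) by (auto dest: bij_betwE)
  then obtain w where w: "\<And>i. i < k \<Longrightarrow> w i \<in> S \<and> x i = f \<otimes> w i" by metis
  have "gprod G (map (\<lambda>i. x (\<sigma> i) [^] (m ! i)) [0..<k]) \<in> U" if \<sigma>: "\<sigma> permutes {..<k}" for \<sigma>
  proof -
    have \<sigma>k: "i < k \<Longrightarrow> \<sigma> i < k" for i using permutes_in_image[OF \<sigma>] by auto
    have "map (\<lambda>i. x (\<sigma> i) [^] (m ! i)) [0..<k] = map (\<lambda>i. (f \<otimes> w (\<sigma> i)) [^] (m ! i)) [0..<k]"
      using w \<sigma>k by simp
    moreover have "gprod G (map (\<lambda>i. (f \<otimes> w (\<sigma> i)) [^] (m ! i)) [0..<k]) \<in> U"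
      using gprod_translates_in_products[of f m "\<lambda>i. w (\<sigma> i)"] f F(2) w \<sigma>k m U
      unfolding k_def by blast
    ultimately show ?thesis by (simp only:)
  qed
  moreover have "\<forall>i<k. x i \<in> X" "inj_on x {..<k}"
    using x B(3) by (auto simp: bij_betw_def)
  ultimately show "\<exists>x. (\<forall>i<length m. x i \<in> X) \<and> inj_on x {..<length m} \<and>
      (\<forall>\<sigma>. \<sigma> permutes {..<length m} \<longrightarrow> gprod G (map (\<lambda>i. x (\<sigma> i) [^] (m ! i)) [0..<length m]) \<in> U)"
    unfolding k_def by blast
qed

locale topgroup = group G for G (structure) +
  fixes T :: "'a topology"
  assumes topological_group: "topological_group G T"
begin

lemma topspace_eq: "topspace T = carrier G"
  using topological_group unfolding topological_group_def by blast

lemma continuous_map_mult: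
  assumes "continuous_map X T f" "continuous_map X T g"
  shows "continuous_map X T (\<lambda>x. f x \<otimes> g x)"
proof -
  have "continuous_map (prod_topology T T) T (\<lambda>p. fst p \<otimes> snd p)"
    using topological_group unfolding topological_group_def by blast
  from continuous_map_compose[OF continuous_map_pairedI[OF assms] this] show ?thesis
    by (simp add: o_def)
qed

lemma continuous_map_conj: "h \<in> carrier G \<Longrightarrow> continuous_map T T (\<lambda>x. h \<otimes> x \<otimes> inv h)"
  by (intro continuous_map_mult continuous_map_id[unfolded id_def] continuous_map_const[THEN iffD2])
    (auto simp: topspace_eq)

lemma mult_nbhd:
  assumes "openin T Q" "\<one> \<in> Q"
  shows "\<exists>V. openin T V \<and> \<one> \<in> V \<and> (\<forall>a\<in>V. \<forall>b\<in>V. a \<otimes> b \<in> Q)"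
proof -
  define P where "P = {p \<in> topspace (prod_topology T T). fst p \<otimes> snd p \<in> Q}"
  have "continuous_map (prod_topology T T) T (\<lambda>p. fst p \<otimes> snd p)"
    using topological_group unfolding topological_group_def by blast
  then have "openin (prod_topology T T) P"
    unfolding P_def using assms(1) by (rule openin_continuous_map_preimage)
  moreover have "(\<one>, \<one>) \<in> P"
    unfolding P_def using assms(2) by (simp add: topspace_eq)
  ultimately obtain A B where "openin T A" "openin T B" "\<one> \<in> A" "\<one> \<in> B" "A \<times> B \<subseteq> P"
    using openin_prod_topology_alt[of T T P] by blast
  then show ?thesis
    unfolding P_def by (intro exI[of _ "A \<inter> B"]) auto
qed

lemma products_nbhd:
  assumes "openin T Q" "\<one> \<in> Q"
  shows "\<exists>V. openin T V \<and> \<one> \<in> V \<and> products G V n \<subseteq> Q"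
  using assms
proof (induction n arbitrary: Q)
  case 0
  then show ?case by auto
next
  case (Suc n)
  obtain V where V: "openin T V" "\<one> \<in> V" "\<forall>a\<in>V. \<forall>b\<in>V. a \<otimes> b \<in> Q"
    using mult_nbhd[OF Suc.prems] by blast
  obtain V' where V': "openin T V'" "\<one> \<in> V'" "products G V' n \<subseteq> V"
    using Suc.IH[OF V(1,2)] by blast
  have "products G (V \<inter> V') n \<subseteq> V" using V'(3) products_mono[of "V \<inter> V'" V'] by blast
  then have "products G (V \<inter> V') (Suc n) \<subseteq> Q" using V(3) by auto
  then show ?case using V V' by blast
qed

lemma symmetric_nbhd:
  assumes "openin T Q" "\<one> \<in> Q"
  shows "\<exists>V. openin T V \<and> \<one> \<in> V \<and> V \<subseteq> Q \<and> (\<forall>v\<in>V. inv v \<in> V)"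
proof -
  have "continuous_map T T (\<lambda>x. inv x)"
    using topological_group unfolding topological_group_def by blast
  then have "openin T {x \<in> topspace T. inv x \<in> Q}"
    using assms(1) by (rule openin_continuous_map_preimage)
  then have "openin T (Q \<inter> {x \<in> topspace T. inv x \<in> Q})"
    using assms(1) by blast
  moreover have "Q \<subseteq> carrier G" using openin_subset[OF assms(1)] by (simp add: topspace_eq)
  ultimately show ?thesis
    using assms(2) by (intro exI[of _ "Q \<inter> {x \<in> topspace T. inv x \<in> Q}"]) (auto simp: topspace_eq)
qed

end

locale totally_bounded_topgroup = topgroup +
  assumes totally_bounded: "totally_bounded_group G T"
begin

lemma finite_translates_cover:
  assumes "openin T W" "\<one> \<in> W"
  obtains F where "finite F" "F \<subseteq> carrier G" "carrier G = {f \<otimes> u | f u. f \<in> F \<and> u \<in> W}"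
proof -
  have "nbhd T \<one> W" using assms openin_subset[OF assms(1)] unfolding nbhd_def by blast
  then show ?thesis
    using totally_bounded that unfolding totally_bounded_group_def by blast
qed

lemma conj_nbhd:
  assumes "openin T V" "\<one> \<in> V"
  shows "\<exists>W. openin T W \<and> \<one> \<in> W \<and> conj_closure G W \<subseteq> V"
proof -
  obtain V1 where V1: "openin T V1" "\<one> \<in> V1" "products G V1 3 \<subseteq> V"
    using products_nbhd[OF assms] by blast
  obtain V0 where V0: "openin T V0" "\<one> \<in> V0" "V0 \<subseteq> V1" "\<forall>v\<in>V0. inv v \<in> V0"
    using symmetric_nbhd[OF V1(1,2)] by blast
  have V0_carrier: "V0 \<subseteq> carrier G" using openin_subset[OF V0(1)] by (simp add: topspace_eq)
  obtain F where F: "finite F" "F \<subseteq> carrier G" "carrier G = {f \<otimes> u | f u. f \<in> F \<and> u \<in> V0}"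
    using finite_translates_cover[OF V0(1,2)] by blast
  \<comment> \<open>an intersection of finitely many conjugates of \<open>V0\<close>; every \<open>g\<close> is \<open>u\<inverse> f\<inverse>\<close> with \<open>u \<in> V0\<close>, \<open>f \<in> F\<close>\<close>
  define W where "W = (\<Inter>f\<in>F. {x \<in> topspace T. inv f \<otimes> x \<otimes> inv (inv f) \<in> V0}) \<inter> topspace T"
  have "openin T W"
    unfolding W_def using F(1,2) V0(1)
    by (intro openin_INT openin_continuous_map_preimage[OF continuous_map_conj]) auto
  moreover have "\<one> \<in> W" unfolding W_def using F(2) V0(2) by (auto simp: topspace_eq)
  moreover have "conj_closure G W \<subseteq> V"
  proof
    fix y assume "y \<in> conj_closure G W"
    then obtain g w where gw: "y = g \<otimes> w \<otimes> inv g" "g \<in> carrier G" "w \<in> W"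
      unfolding conj_closure_def by blast
    have w: "w \<in> carrier G" using gw(3) unfolding W_def by (auto simp: topspace_eq)
    have "inv g \<in> carrier G" using gw(2) by simp
    then have "inv g \<in> {f \<otimes> u | f u. f \<in> F \<and> u \<in> V0}" unfolding F(3) .
    then obtain f u where fu: "inv g = f \<otimes> u" "f \<in> F" "u \<in> V0" by blast
    have f: "f \<in> carrier G" and u: "u \<in> carrier G" using fu F(2) V0_carrier by auto
    define c where "c = inv f \<otimes> w \<otimes> f"
    have "c \<in> V0" using gw(3) fu(2) f unfolding W_def c_def by auto
    have "g = inv u \<otimes> inv f"
      using fu f u gw(2) by (metis inv_inv inv_mult_group)
    then have "y = inv u \<otimes> (c \<otimes> (u \<otimes> \<one>))"
      using gw(1) fu(1) f u w unfolding c_def by (simp add: m_assoc)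
    also have "\<dots> \<in> products G V1 3"
    proof -
      have "inv u \<in> V1" "c \<in> V1" "u \<in> V1" using \<open>c \<in> V0\<close> fu(3) V0(3,4) by auto
      then show ?thesis by (simp add: numeral_3_eq_3) blast
    qed
    finally show "y \<in> V" using V1(3) by blast
  qed
  ultimately show ?thesis by (intro exI[of _ W] conjI)
qed

lemma ramsey_product_subset_nbhd:
  assumes m: "sum_list m = 0" and U: "nbhd T \<one> U"
  shows "ramsey_product_subset G m U"
proof -
  define N where "N = (\<Sum>e\<leftarrow>m. nat \<bar>e\<bar>)"
  obtain U0 where U0: "openin T U0" "\<one> \<in> U0" "U0 \<subseteq> U"
    using U unfolding nbhd_def by blast
  obtain V where V: "openin T V" "\<one> \<in> V" "products G V N \<subseteq> U0"
    using products_nbhd[OF U0(1,2)] by blast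
  obtain W0 where W0: "openin T W0" "\<one> \<in> W0" "conj_closure G W0 \<subseteq> V"
    using conj_nbhd[OF V(1,2)] by blast
  obtain W where W: "openin T W" "\<one> \<in> W" "W \<subseteq> W0" "\<forall>w\<in>W. inv w \<in> W"
    using symmetric_nbhd[OF W0(1,2)] by blast
  have W_carrier: "W \<subseteq> carrier G" using openin_subset[OF W(1)] by (simp add: topspace_eq)
  interpret C: normal_symmetric_subset G "conj_closure G W"
    using normal_symmetric_subset_conj_closure W_carrier W(4) by blast
  obtain F where F: "finite F" "F \<subseteq> carrier G" "carrier G = {f \<otimes> u | f u. f \<in> F \<and> u \<in> W}"
    using finite_translates_cover[OF W(1,2)] by blast
  have "carrier G = {f \<otimes> u | f u. f \<in> F \<and> u \<in> conj_closure G W}"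
  proof
    show "carrier G \<subseteq> {f \<otimes> u | f u. f \<in> F \<and> u \<in> conj_closure G W}"
      unfolding F(3) using subset_conj_closure[OF W_carrier] by blast
    show "{f \<otimes> u | f u. f \<in> F \<and> u \<in> conj_closure G W} \<subseteq> carrier G"
      using F(2) C.subset by blast
  qed
  moreover have "products G (conj_closure G W) N \<subseteq> U"
    using products_mono[OF conj_closure_mono[OF W(3)]] products_mono[OF W0(3)] V(3) U0(3) by blast
  ultimately show ?thesis
    using C.ramsey_product_subset_if_translates_cover F(1,2) m unfolding N_def by blast
qed

end

theorem proposition5p1:
  fixes G :: "('a, 'b) monoid_scheme" and T :: "'a topology"
    and m :: "int list" and U :: "'a set"
  assumes "topological_group G T"
    and "totally_bounded_group G T"
    and "infinite (carrier G)"
    and "sum_list m = 0"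
    and "nbhd T \<one>\<^bsub>G\<^esub> U"
  shows "ramsey_product_subset G m U"
proof -
  interpret totally_bounded_topgroup G T
    using assms(1,2) unfolding topological_group_def
    by (intro totally_bounded_topgroup.intro topgroup.intro totally_bounded_topgroup_axioms.intro
        topgroup_axioms.intro) (simp_all add: topological_group_def)
  show ?thesis using assms(4,5) by (rule ramsey_product_subset_nbhd)
qed

end
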